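(* In the split setting, let $\mathcal{H}$ have orthonormal basis $\{\phi_\gamma\}_{\gamma\in\mathbb{F}}$ and put $m(\alpha_1\mathbf{e}_1,\alpha_2\mathbf{e}_2)=i^{h((\alpha_1\alpha_2)^{1/2})}$. For $\mathbf{u}=\alpha_1\mathbf{e}_1+\alpha_2\mathbf{e}_2$ and $\mathbf{v}=\beta_1\mathbf{e}_1+\beta_2\mathbf{e}_2$, define $$W(\mathbf{u})\phi_\gamma=m(\alpha_1\mathbf{e}_1,\alpha_2\mathbf{e}_2)(-1)^{\mathrm{Tr}(\alpha_2\gamma)}\phi_{\gamma+\alpha_1},$$ and, for $\mathbf{u}\neq0$, $$\mathsf{Q}(o+\mathbf{v}+\mathbb{F}\mathbf{u})\phi_\gamma=\frac{1}{|\mathbb{F}|}\sum_{\lambda\in\mathbb{F}} i^{h(\lambda(\alpha_1\alpha_2)^{1/2})}(-1)^{\mathrm{Tr}\,\lambda[\alpha_2(\beta_1+\gamma)+\alpha_1\beta_2]}\phi_{\gamma+\lambda\alpha_1}.$$ Then the following hold: - $\mathsf{Q}$ is a well-defined quadrature system on $\mathcal{H}$. - $W$ is a projective unitary representation of $V$ with $W(\mathbf{w})\mathsf{Q}(\mathfrak{l})W(\mathbf{w})^*=\mathsf{Q}(\mathfrak{l}+\mathbf{w})$ for all lines $\mathfrak{l}$ and all $\mathbf{w}\in V$, and its multiplier is the Weyl multiplier $i^g$ of $(V,S)$. - The unitary $U(A)$ given by $U(A)\phi_\gamma=\phi_{\xi\gamma}$ satisfies $U(A)\mathsf{Q}(\mathfrak{l})U(A)^*=\mathsf{Q}(A\cdot\mathfrak{l})$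 for all lines $\mathfrak{l}$. Hence $\mathsf{Q}$ is $(T\rtimes V)$-covariant.
   Context: $\mathbb{F}$ is a finite field with $|\mathbb{F}|=2^n$, $\mathrm{Tr}$ is its trace to $\mathbb{Z}_2$, and $\alpha^{1/2}=\alpha^{|\mathbb{F}|/2}$. $V$ is a $2$-dimensional $\mathbb{F}$-space with symplectic form $S$ (nonzero bilinear with $S(\mathbf{v},\mathbf{v})=0$). $\Omega$ is an affine space over $V$ (free transitive $V$-action) with fixed origin $o$. Lines are sets $o+\mathbf{v}+\mathbb{F}\mathbf{u}$ with $\mathbf{u}\neq0$, and $A\cdot(o+\mathbf{v}+\mathbb{F}\mathbf{u})=o+A\mathbf{v}+\mathbb{F}A\mathbf{u}$ for $A\in\mathrm{SL}(V)$. A quadrature system on $\mathcal{H}$ ($\dim\mathcal{H}=|\mathbb{F}|$) is a map $\mathsf{Q}$ from lines to operators such that: (i) each $\mathsf{Q}(\mathfrak{l})$ is a rank-one orthogonal projection; (ii) for each direction, the projections of the lines parallel to it sum to $I$; (iii) $\mathrm{tr}(\mathsf{Q}(\mathfrak{l}_1)\mathsf{Q}(\mathfrak{l}_2))=1/|\mathbb{F}|$ for lines of different directions. $T$ is a maximal split torus, i.e. a cyclic subgroup of $\mathrm{SL}(V)$ of order $|\mathbb{F}|-1$, with generator $A$ having eigenvalues $\xi,\xi^{-1}\in\mathbb{F}$. $\{\mathbf{e}_1,\mathbf{e}_2\}$ is a basis with $S(\mathbf{e}_1,\mathbf{e}_2)=1$, $A\mathbf{e}_1=\xi\mathbf{e}_1$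 and $A\mathbf{e}_2=\xi^{-1}\mathbf{e}_2$. $h:\mathbb{F}\to\mathbb{Z}_4$ is defined by $h(\sum_i z_i\omega_i)=\sum_i r_iz_i^2$ ($z_i\in\mathbb{Z}_2$, $z^2$ read in $\mathbb{Z}_4$), where $\{\omega_i\}$ is a $\mathbb{Z}_2$-basis of $\mathbb{F}$ with $\mathrm{Tr}(\omega_i\omega_j)=\delta_{ij}$ and $r_i\in\{\pm1\}$ are fixed signs. $g$ is the $\mathbb{Z}_4$-valued function $$g(\mathbf{u},\mathbf{v})=h\big(B_+(\mathbf{u}+\mathbf{v},\mathbf{u}+\mathbf{v})^{1/2}\big)-h\big(B_+(\mathbf{u},\mathbf{u})^{1/2}\big)-h\big(B_+(\mathbf{v},\mathbf{v})^{1/2}\big)+2\,\mathrm{Tr}\,B_+(\mathbf{u},\mathbf{v}),$$ with $B_+(\mathbf{u},\mathbf{v})=S(\mathbf{u},\mathbf{e}_1)S(\mathbf{v},\mathbf{e}_2)$. A Weyl multiplier for $(V,S)$ is a unit-modulus $2$-cocycle $m$ on $V$ with $m(\mathbf{d}_1,\mathbf{d}_2)=1$ for $\mathbf{d}_1,\mathbf{d}_2$ in a common direction and $\overline{m(\mathbf{u},\mathbf{v})}m(\mathbf{v},\mathbf{u})=(-1)^{\mathrm{Tr}\,S(\mathbf{u},\mathbf{v})}$. *)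

theory Defs
  imports Complex_Main "HOL-Library.Cardinality"
begin

text \<open>Absolute trace \<open>Tr : F \<rightarrow> Z_2\<close> for \<open>|F| = 2^n\<close>; its value is 0 or 1 in F.\<close>
definition Tr :: "nat \<Rightarrow> 'a::field \<Rightarrow> 'a" where
  "Tr n x = (\<Sum>k<n. x ^ (2 ^ k))"

text \<open>\<open>(-1)^t\<close> for \<open>t \<in> Z_2\<close> (viewed inside F).\<close>
definition msign :: "'a::field \<Rightarrow> complex" where
  "msign t = (if t = 0 then 1 else -1)"

text \<open>\<open>i^k\<close> for \<open>k \<in> Z_4\<close> (represented by an integer).\<close>
definition ipow :: "int \<Rightarrow> complex" where
  "ipow k = \<i> ^ nat (k mod 4)"

definition fsqrt :: "'a::{field,finite} \<Rightarrow> 'a" where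
  "fsqrt x = x ^ (CARD('a) div 2)"

definition coords :: "nat \<Rightarrow> (nat \<Rightarrow> 'a::field) \<Rightarrow> 'a \<Rightarrow> nat \<Rightarrow> int" where
  "coords n \<omega> x = (THE z. (\<forall>i<n. z i \<in> {0,1}) \<and> (\<forall>i\<ge>n. z i = 0) \<and>
                           x = (\<Sum>i<n. of_int (z i) * \<omega> i))"

definition hZ4 :: "nat \<Rightarrow> (nat \<Rightarrow> 'a::field) \<Rightarrow> (nat \<Rightarrow> int) \<Rightarrow> 'a \<Rightarrow> int" where
  "hZ4 n \<omega> r x = (\<Sum>i<n. r i * (coords n \<omega> x i)^2) mod 4"

type_synonym 'a vec = "'a \<times> 'a"

definition vadd :: "'a::field vec \<Rightarrow> 'a vec \<Rightarrow> 'a vec" where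
  "vadd u v = (fst u + fst v, snd u + snd v)"

definition vscale :: "'a::field \<Rightarrow> 'a vec \<Rightarrow> 'a vec" where
  "vscale c u = (c * fst u, c * snd u)"

definition e1 :: "'a::field vec" where "e1 = (1, 0)"
definition e2 :: "'a::field vec" where "e2 = (0, 1)"

definition Sform :: "'a::field vec \<Rightarrow> 'a vec \<Rightarrow> 'a" where
  "Sform u v = fst u * snd v - snd u * fst v"

definition Bplus :: "'a::field vec \<Rightarrow> 'a vec \<Rightarrow> 'a" where
  "Bplus u v = Sform u e1 * Sform v e2"

definition gZ4 :: "nat \<Rightarrow> (nat \<Rightarrow> 'a::{field,finite}) \<Rightarrow> (nat \<Rightarrow> int) \<Rightarrow> 'a vec \<Rightarrow> 'a vec \<Rightarrow> int" where
  "gZ4 n \<omega> r u v =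
     (hZ4 n \<omega> r (fsqrt (Bplus (vadd u v) (vadd u v)))
      - hZ4 n \<omega> r (fsqrt (Bplus u u)) - hZ4 n \<omega> r (fsqrt (Bplus v v))
      + 2 * (if Tr n (Bplus u v) = 0 then 0 else 1)) mod 4"

text \<open>Lines \<open>o + v + F u\<close> (points of \<open>\<Omega>\<close> identified with V via the origin o).\<close>
definition line :: "'a::field vec \<Rightarrow> 'a vec \<Rightarrow> 'a vec set" where
  "line v u = {vadd v (vscale c u) | c. True}"

definition is_line :: "'a::field vec set \<Rightarrow> bool" where
  "is_line l \<longleftrightarrow> (\<exists>v u. u \<noteq> (0,0) \<and> l = line v u)"

definition parallel :: "'a::field vec \<Rightarrow> 'a vec \<Rightarrow> bool" where
  "parallel u u' \<longleftrightarrow> (\<exists>c. u' = vscale c u)"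

definition translate :: "'a::field vec set \<Rightarrow> 'a vec \<Rightarrow> 'a vec set" where
  "translate l w = (\<lambda>p. vadd p w) ` l"

section \<open>Operators on \<open>H = span{\<phi>_\<gamma>}\<close> as matrices \<open>M \<delta> \<gamma> = \<langle>\<phi>_\<delta>, M \<phi>_\<gamma>\<rangle>\<close>\<close>

type_synonym 'a op = "'a \<Rightarrow> 'a \<Rightarrow> complex"

definition opmult :: "'a::finite op \<Rightarrow> 'a op \<Rightarrow> 'a op" where
  "opmult A B = (\<lambda>\<delta> \<gamma>. \<Sum>\<eta>\<in>UNIV. A \<delta> \<eta> * B \<eta> \<gamma>)"

definition adj :: "'a op \<Rightarrow> 'a op" where
  "adj A = (\<lambda>\<delta> \<gamma>. cnj (A \<gamma> \<delta>))"

definition idop :: "'a op" where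
  "idop = (\<lambda>\<delta> \<gamma>. if \<delta> = \<gamma> then 1 else 0)"

definition optrace :: "'a::finite op \<Rightarrow> complex" where
  "optrace A = (\<Sum>\<gamma>\<in>UNIV. A \<gamma> \<gamma>)"

definition opsum :: "'b set \<Rightarrow> ('b \<Rightarrow> 'a op) \<Rightarrow> 'a op" where
  "opsum I f = (\<lambda>\<delta> \<gamma>. \<Sum>i\<in>I. f i \<delta> \<gamma>)"

definition unitary_op :: "'a::finite op \<Rightarrow> bool" where
  "unitary_op U \<longleftrightarrow> opmult U (adj U) = idop \<and> opmult (adj U) U = idop"

definition rank_one_proj :: "'a::finite op \<Rightarrow> bool" where
  "rank_one_proj P \<longleftrightarrow> (\<exists>\<psi>. (\<Sum>\<gamma>\<in>UNIV. (cmod (\<psi> \<gamma>))^2) = 1 \<and>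
                              P = (\<lambda>\<delta> \<gamma>. \<psi> \<delta> * cnj (\<psi> \<gamma>)))"

definition quadrature_system :: "('a::{field,finite} vec set \<Rightarrow> 'a op) \<Rightarrow> bool" where
  "quadrature_system Q \<longleftrightarrow>
     (\<forall>l. is_line l \<longrightarrow> rank_one_proj (Q l)) \<and>
     (\<forall>u. u \<noteq> (0,0) \<longrightarrow> opsum {line v u | v. True} Q = idop) \<and>
     (\<forall>v1 u1 v2 u2. u1 \<noteq> (0,0) \<longrightarrow> u2 \<noteq> (0,0) \<longrightarrow> \<not> parallel u1 u2 \<longrightarrow>
        optrace (opmult (Q (line v1 u1)) (Q (line v2 u2))) = 1 / of_nat CARD('a))"

text \<open>Projective unitary representation with multiplier m, convention \<open>W(u+v) = m(u,v) W(u) W(v)\<close>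
  (the convention under which the multiplier of the construction is \<open>i^g\<close>).\<close>
definition proj_unitary_rep :: "('a::{field,finite} vec \<Rightarrow> 'a op) \<Rightarrow> ('a vec \<Rightarrow> 'a vec \<Rightarrow> complex) \<Rightarrow> bool" where
  "proj_unitary_rep W m \<longleftrightarrow> (\<forall>u. unitary_op (W u)) \<and>
     (\<forall>u v. cmod (m u v) = 1) \<and>
     (\<forall>u v. W (vadd u v) = (\<lambda>\<delta> \<gamma>. m u v * opmult (W u) (W v) \<delta> \<gamma>))"

definition weyl_multiplier :: "nat \<Rightarrow> ('a::{field,finite} vec \<Rightarrow> 'a vec \<Rightarrow> complex) \<Rightarrow> bool" where
  "weyl_multiplier n m \<longleftrightarrow>
     (\<forall>u v. cmod (m u v) = 1) \<and>
     (\<forall>u v w. m u v * m (vadd u v) w = m u (vadd v w) * m v w) \<and>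
     (\<forall>d1 d2. (\<exists>u a b. d1 = vscale a u \<and> d2 = vscale b u) \<longrightarrow> m d1 d2 = 1) \<and>
     (\<forall>u v. cnj (m u v) * m v u = msign (Tr n (Sform u v)))"

definition Wop :: "nat \<Rightarrow> (nat \<Rightarrow> 'a::{field,finite}) \<Rightarrow> (nat \<Rightarrow> int) \<Rightarrow> 'a vec \<Rightarrow> 'a op" where
  "Wop n \<omega> r u = (\<lambda>\<delta> \<gamma>. if \<delta> = \<gamma> + fst u
      then ipow (hZ4 n \<omega> r (fsqrt (fst u * snd u))) * msign (Tr n (snd u * \<gamma>)) else 0)"

definition Qrep :: "nat \<Rightarrow> (nat \<Rightarrow> 'a::{field,finite}) \<Rightarrow> (nat \<Rightarrow> int) \<Rightarrow> 'a vec \<Rightarrow> 'a vec \<Rightarrow> 'a op" where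
  "Qrep n \<omega> r v u = (\<lambda>\<delta> \<gamma>. (1 / of_nat CARD('a)) *
      (\<Sum>lam\<in>UNIV. if \<delta> = \<gamma> + lam * fst u then
         ipow (hZ4 n \<omega> r (lam * fsqrt (fst u * snd u))) *
         msign (Tr n (lam * (snd u * (fst v + \<gamma>) + fst u * snd v)))
       else 0))"

definition Qline :: "nat \<Rightarrow> (nat \<Rightarrow> 'a::{field,finite}) \<Rightarrow> (nat \<Rightarrow> int) \<Rightarrow> 'a vec set \<Rightarrow> 'a op" where
  "Qline n \<omega> r l = (let p = (SOME p. snd p \<noteq> (0,0) \<and> l = line (fst p) (snd p))
                     in Qrep n \<omega> r (fst p) (snd p))"

text \<open>Torus element \<open>A^k\<close>: \<open>e_1 \<mapsto> \<xi>^k e_1\<close>, \<open>e_2 \<mapsto> \<xi>^{-k} e_2\<close>, acting on lines.\<close>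
definition torus_act :: "'a::field \<Rightarrow> 'a vec \<Rightarrow> 'a vec" where
  "torus_act c u = (c * fst u, inverse c * snd u)"

definition line_act :: "'a::field \<Rightarrow> 'a vec set \<Rightarrow> 'a vec set" where
  "line_act c l = torus_act c ` l"

definition Uop :: "'a::field \<Rightarrow> 'a op" where
  "Uop c = (\<lambda>\<delta> \<gamma>. if \<delta> = c * \<gamma> then 1 else 0)"

end

theory Submission
  imports Defs
begin

text \<open>
  The character \<open>\<chi>(x) = (-1)^{Tr x}\<close> is additive and
  \<open>\<Sum>\<^sub>x \<chi>(a x) = |F| [a = 0]\<close>; this yields the orthogonality relations: the projections of a
  parallel class sum to \<open>I\<close>, and lines in different directions have trace product \<open>1/|F|\<close>.
  The function \<open>\<psi>(x) = i^{h(x)}\<close> is a quadratic refinement of the trace form,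
  \<open>\<psi>(x + y) = \<psi>(x) \<psi>(y) \<chi>(x y)\<close>, because \<open>i^{r} i^{r} = -1\<close> for \<open>r = \<plusminus>1\<close> and the
  trace form is diagonal in the dual basis. This makes every \<open>Q(\<l>)\<close> the projection onto a single
  unit vector, and makes \<open>i^g\<close> a cocycle with the Weyl commutation relation. Covariance under \<open>W\<close>
  and \<open>U\<close> is a change of summation variable in the formula for \<open>Q\<close>.
\<close>

lemma i_power_mod4: "\<i> ^ m = \<i> ^ (m mod 4)"
proof -
  have "\<i> ^ m = (\<i> ^ 4) ^ (m div 4) * \<i> ^ (m mod 4)"
    by (simp only: power_mult [symmetric] power_add [symmetric] mult.commute[of 4] div_mult_mod_eq)
  also have "\<i> ^ 4 = (1::complex)"
    by (simp add: power4_eq_xxxx)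
  finally show ?thesis by simp
qed

lemma ipow_add: "ipow (a + b) = ipow a * ipow b"
proof -
  define p where "p = nat (a mod 4)"
  define q where "q = nat (b mod 4)"
  have "(a + b) mod 4 = (int p + int q) mod 4"
    by (simp add: p_def q_def mod_add_eq)
  also have "\<dots> = int ((p + q) mod 4)" by (simp add: zmod_int)
  finally have "ipow (a + b) = \<i> ^ ((p + q) mod 4)" by (simp add: ipow_def)
  also have "\<dots> = ipow a * ipow b"
    by (simp add: ipow_def p_def q_def power_add flip: i_power_mod4)
  finally show ?thesis .
qed

lemma ipow_mod4: "ipow (k mod 4) = ipow k"
  by (simp add: ipow_def)

lemma ipow_0 [simp]: "ipow 0 = 1"
  by (simp add: ipow_def)

lemma ipow_1: "ipow 1 = \<i>"
  by (simp add: ipow_def)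

lemma ipow_2: "ipow 2 = -1"
  by (simp add: ipow_def)

lemma ipow_minus1: "ipow (-1) = - \<i>"
proof -
  have "(-1::int) mod 4 = 3" by simp
  then show ?thesis by (simp add: ipow_def power3_eq_cube)
qed

lemma norm_ipow [simp]: "cmod (ipow k) = 1"
  by (simp add: ipow_def norm_power)

lemma ipow_nonzero [simp]: "ipow k \<noteq> 0"
  by (simp add: ipow_def)

lemma cnj_ipow_mult: "cnj (ipow k) * ipow k = 1"
  using complex_norm_square[of "ipow k"] by (simp add: mult.commute)

lemma ipow_uminus: "ipow (- k) = cnj (ipow k)"
proof -
  have "ipow (- k) * ipow k = cnj (ipow k) * ipow k"
    by (simp add: cnj_ipow_mult flip: ipow_add)
  then show ?thesis by simp
qed

lemma ipow_diff: "ipow (a - b) = ipow a * cnj (ipow b)"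
  using ipow_add[of a "- b"] by (simp add: ipow_uminus)

lemma ipow_sum: "ipow (sum f A) = (\<Prod>i\<in>A. ipow (f i))"
  by (induction A rule: infinite_finite_induct) (simp_all add: ipow_add)

lemma opmult_assoc: "opmult (opmult A B) C = opmult A (opmult B C)"
  for A B C :: "'a::finite op"
proof (intro ext)
  fix \<delta> \<gamma>
  have "opmult (opmult A B) C \<delta> \<gamma> = (\<Sum>\<zeta>\<in>UNIV. \<Sum>\<eta>\<in>UNIV. A \<delta> \<eta> * B \<eta> \<zeta> * C \<zeta> \<gamma>)"
    by (simp add: opmult_def sum_distrib_right)
  also have "\<dots> = (\<Sum>\<eta>\<in>UNIV. \<Sum>\<zeta>\<in>UNIV. A \<delta> \<eta> * B \<eta> \<zeta> * C \<zeta> \<gamma>)"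
    by (rule sum.swap)
  also have "\<dots> = opmult A (opmult B C) \<delta> \<gamma>"
    by (simp add: opmult_def sum_distrib_left mult.assoc)
  finally show "opmult (opmult A B) C \<delta> \<gamma> = opmult A (opmult B C) \<delta> \<gamma>" .
qed

lemma adj_opmult: "adj (opmult A B) = opmult (adj B) (adj A)"
  for A B :: "'a::finite op"
  by (intro ext) (simp add: adj_def opmult_def mult.commute)

lemma opmult_opsum_left: "finite I \<Longrightarrow> opmult (opsum I F) B = opsum I (\<lambda>i. opmult (F i) B)"
  for B :: "'a::finite op"
  by (intro ext) (simp add: opmult_def opsum_def sum_distrib_right sum.swap[of _ UNIV I])

lemma opmult_opsum_right: "finite I \<Longrightarrow> opmult B (opsum I F) = opsum I (\<lambda>i. opmult B (F i))"
  for B :: "'a::finite op"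
  by (intro ext) (simp add: opmult_def opsum_def sum_distrib_left sum.swap[of _ UNIV I])

lemma optrace_opsum: "finite I \<Longrightarrow> optrace (opsum I F) = (\<Sum>i\<in>I. optrace (F i))"
  for F :: "'b \<Rightarrow> 'a::finite op"
  by (simp add: optrace_def opsum_def sum.swap[of _ UNIV I])

lemma opmult_Uop_left:
  fixes A :: "'a::{field,finite} op"
  assumes "c \<noteq> 0"
  shows "opmult (Uop c) A = (\<lambda>\<delta> \<eta>. A (\<delta> / c) \<eta>)"
proof (intro ext)
  fix \<delta> \<eta>
  have "opmult (Uop c) A \<delta> \<eta> = (\<Sum>\<zeta>\<in>UNIV. if \<zeta> = \<delta> / c then A \<zeta> \<eta> else 0)"
    unfolding opmult_def Uop_def using assms by (intro sum.cong refl) (auto simp: field_simps)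
  then show "opmult (Uop c) A \<delta> \<eta> = A (\<delta> / c) \<eta>"
    by simp
qed

lemma opmult_adj_Uop_right:
  fixes A :: "'a::{field,finite} op"
  assumes "c \<noteq> 0"
  shows "opmult A (adj (Uop c)) = (\<lambda>\<delta> \<gamma>. A \<delta> (\<gamma> / c))"
proof (intro ext)
  fix \<delta> \<gamma>
  have "opmult A (adj (Uop c)) \<delta> \<gamma> = (\<Sum>\<eta>\<in>UNIV. if \<eta> = \<gamma> / c then A \<delta> \<eta> else 0)"
    unfolding opmult_def Uop_def adj_def using assms by (intro sum.cong refl) (auto simp: field_simps)
  then show "opmult A (adj (Uop c)) \<delta> \<gamma> = A \<delta> (\<gamma> / c)"
    by simp
qed

lemma Uop_conj:
  "c \<noteq> 0 \<Longrightarrow> opmult (opmult (Uop c) A) (adj (Uop c)) = (\<lambda>\<delta> \<gamma>. A (\<delta> / c) (\<gamma> / c))"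
  by (simp add: opmult_Uop_left opmult_adj_Uop_right)

lemma Uop_unitary:
  assumes "(c::'a::{field,finite}) \<noteq> 0"
  shows "unitary_op (Uop c)"
proof -
  have "opmult (Uop c) (adj (Uop c)) = idop"
    unfolding opmult_Uop_left[OF assms] using assms by (auto simp: adj_def Uop_def idop_def intro!: ext)
  moreover have "opmult (adj (Uop c)) (Uop c) = idop"
  proof (intro ext)
    fix \<delta> \<gamma>
    have "opmult (adj (Uop c)) (Uop c) \<delta> \<gamma> =
        (\<Sum>\<eta>\<in>UNIV. if \<eta> = c * \<delta> then idop \<delta> \<gamma> else 0)"
      unfolding opmult_def adj_def Uop_def idop_def using assms by (intro sum.cong refl) auto
    then show "opmult (adj (Uop c)) (Uop c) \<delta> \<gamma> = idop \<delta> \<gamma>"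
      by simp
  qed
  ultimately show ?thesis
    by (simp add: unitary_op_def)
qed

text \<open>The weighted translation \<open>\<phi>_\<gamma> \<mapsto> f(\<gamma>) \<phi>_{\<gamma>+a}\<close>; W and all the summands of Q are of this form.\<close>
definition shift_op :: "'a::ab_group_add \<Rightarrow> ('a \<Rightarrow> complex) \<Rightarrow> 'a op" where
  "shift_op a f = (\<lambda>\<delta> \<gamma>. if \<delta> = \<gamma> + a then f \<gamma> else 0)"

lemma opmult_shift_op_left: "opmult (shift_op a f) A = (\<lambda>\<delta> \<eta>. f (\<delta> - a) * A (\<delta> - a) \<eta>)"
  for a :: "'a::{ab_group_add,finite}"
proof (intro ext)
  fix \<delta> \<eta>
  have "opmult (shift_op a f) A \<delta> \<eta> = (\<Sum>\<zeta>\<in>UNIV. if \<zeta> = \<delta> - a then f \<zeta> * A \<zeta> \<eta> else 0)"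
    unfolding opmult_def shift_op_def by (intro sum.cong refl) (auto simp: eq_diff_eq)
  then show "opmult (shift_op a f) A \<delta> \<eta> = f (\<delta> - a) * A (\<delta> - a) \<eta>"
    by simp
qed

lemma opmult_shift_op_right: "opmult A (shift_op b g) = (\<lambda>\<delta> \<gamma>. A \<delta> (\<gamma> + b) * g \<gamma>)"
  for b :: "'a::{ab_group_add,finite}"
proof (intro ext)
  fix \<delta> \<gamma>
  have "opmult A (shift_op b g) \<delta> \<gamma> = (\<Sum>\<eta>\<in>UNIV. if \<eta> = \<gamma> + b then A \<delta> \<eta> * g \<gamma> else 0)"
    unfolding opmult_def shift_op_def by (intro sum.cong refl) auto
  then show "opmult A (shift_op b g) \<delta> \<gamma> = A \<delta> (\<gamma> + b) * g \<gamma>"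
    by simp
qed

lemma adj_shift_op: "adj (shift_op a f) = shift_op (- a) (\<lambda>\<gamma>. cnj (f (\<gamma> - a)))"
  for a :: "'a::ab_group_add"
  by (intro ext) (auto simp: adj_def shift_op_def)

lemma opmult_shift_op: "opmult (shift_op a f) (shift_op b g) = shift_op (a + b) (\<lambda>\<gamma>. f (\<gamma> + b) * g \<gamma>)"
  for a b :: "'a::{ab_group_add,finite}"
  unfolding opmult_shift_op_right by (intro ext) (auto simp: shift_op_def add_ac)

lemma shift_op_conj:
  "opmult (opmult (shift_op a f) A) (adj (shift_op a f)) =
     (\<lambda>\<delta> \<gamma>. f (\<delta> - a) * A (\<delta> - a) (\<gamma> - a) * cnj (f (\<gamma> - a)))"
  for a :: "'a::{ab_group_add,finite}"
  by (simp add: opmult_shift_op_left adj_shift_op opmult_shift_op_right)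

lemma optrace_shift_op: "optrace (shift_op a f) = (if a = 0 then (\<Sum>\<gamma>\<in>UNIV. f \<gamma>) else 0)"
  for a :: "'a::{ab_group_add,finite}"
  by (auto simp: optrace_def shift_op_def)

lemma shift_op_unitary:
  fixes a :: "'a::{ab_group_add,finite}"
  assumes "\<And>\<gamma>. cmod (f \<gamma>) = 1"
  shows "unitary_op (shift_op a f)"
proof -
  have "cnj (f \<gamma>) * f \<gamma> = 1" for \<gamma>
    using assms by (metis complex_norm_square mult.commute of_real_1 power_one)
  moreover have "idop = shift_op (0::'a) (\<lambda>_. 1)"
    by (intro ext) (simp add: idop_def shift_op_def)
  ultimately show ?thesis
    unfolding unitary_op_def adj_shift_op opmult_shift_op by (simp add: mult.commute)
qed

lemma sum_sum_eq_at_zero: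
  fixes F :: "'a::{zero,finite} \<Rightarrow> 'b::{zero,finite} \<Rightarrow> 'c::comm_monoid_add"
  assumes "\<And>x y. (x, y) \<noteq> (0, 0) \<Longrightarrow> F x y = 0"
  shows "(\<Sum>x\<in>UNIV. \<Sum>y\<in>UNIV. F x y) = F 0 0"
proof -
  have "(\<Sum>y\<in>UNIV. F x y) = (\<Sum>y\<in>UNIV. if y = (0::'b) then (if x = 0 then F 0 0 else 0) else 0)" for x
    by (rule sum.cong) (auto simp: assms)
  then show ?thesis by simp
qed

lemma fst_vadd [simp]: "fst (vadd u v) = fst u + fst v"
  by (simp add: vadd_def)

lemma snd_vadd [simp]: "snd (vadd u v) = snd u + snd v"
  by (simp add: vadd_def)

lemma fst_vscale [simp]: "fst (vscale c u) = c * fst u"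
  by (simp add: vscale_def)

lemma snd_vscale [simp]: "snd (vscale c u) = c * snd u"
  by (simp add: vscale_def)

lemma line_eq_range: "line v u = range (\<lambda>c. vadd v (vscale c u))"
  by (auto simp: line_def)

lemma mem_line_iff: "p \<in> line v u \<longleftrightarrow> (\<exists>c. p = vadd v (vscale c u))"
  by (auto simp: line_def)

lemma base_mem_line: "v \<in> line v u"
  unfolding mem_line_iff by (intro exI[of _ 0]) (simp add: prod_eq_iff)

lemma line_eq_imp_reparam:
  fixes u u' :: "'a::field vec"
  assumes "u' \<noteq> (0,0)" and "line v u = line v' u'"
  obtains t c where "c \<noteq> 0" "v' = vadd v (vscale t u)" "u' = vscale c u"
proof -
  have "v' \<in> line v u" "vadd v' u' \<in> line v u"
    using assms(2) base_mem_line[of v' u'] by (auto simp: mem_line_iff prod_eq_iff intro: exI[of _ 1])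
  then obtain t t' where t: "v' = vadd v (vscale t u)" and t': "vadd v' u' = vadd v (vscale t' u)"
    unfolding mem_line_iff by blast
  then have "u' = vscale (t' - t) u"
    by (auto simp: prod_eq_iff algebra_simps)
  moreover from this have "t' - t \<noteq> 0"
    using assms(1) by (auto simp: prod_eq_iff)
  ultimately show thesis using t that by blast
qed

lemma line_eq_iff_mem: "line v u = line v0 u \<longleftrightarrow> v \<in> line v0 u"
proof
  assume "line v u = line v0 u"
  then show "v \<in> line v0 u" using base_mem_line[of v u] by simp
next
  assume "v \<in> line v0 u"
  then obtain t where t: "v = vadd v0 (vscale t u)"
    unfolding mem_line_iff by blast
  have "vadd v (vscale c u) = vadd v0 (vscale (t + c) u)"
    and "vadd v0 (vscale c u) = vadd v (vscale (c - t) u)" for c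
    using t by (simp_all add: prod_eq_iff algebra_simps)
  then show "line v u = line v0 u"
    unfolding line_def by blast
qed

lemma card_line:
  assumes "u \<noteq> ((0::'a::{field,finite}), 0)"
  shows "card (line v u) = CARD('a)"
proof -
  have "inj (\<lambda>c. vadd v (vscale c u))"
    using assms by (intro injI) (auto simp: prod_eq_iff)
  then show ?thesis
    unfolding line_eq_range by (simp add: card_image)
qed

lemma translate_line: "translate (line v u) w = line (vadd v w) u"
  unfolding translate_def line_def by (auto simp: prod_eq_iff ac_simps image_iff)

lemma torus_act_nonzero: "c \<noteq> 0 \<Longrightarrow> u \<noteq> (0,0) \<Longrightarrow> torus_act c u \<noteq> (0,0)"
  by (auto simp: torus_act_def prod_eq_iff)

lemma line_act_line: "line_act c (line v u) = line (torus_act c v) (torus_act c u)"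
proof -
  have "torus_act c (vadd v (vscale t u)) = vadd (torus_act c v) (vscale t (torus_act c u))" for t
    by (simp add: prod_eq_iff torus_act_def vadd_def algebra_simps)
  then show ?thesis
    unfolding line_act_def line_eq_range image_image by simp
qed

lemma nonparallel_independent:
  fixes u1 u2 :: "'a::field vec"
  assumes "u1 \<noteq> (0,0)" and "\<not> parallel u1 u2"
    and "x * fst u1 + y * fst u2 = 0" and "x * snd u1 + y * snd u2 = 0"
  shows "x = 0 \<and> y = 0"
proof -
  have "y = 0"
  proof (rule ccontr)
    assume y: "y \<noteq> 0"
    then have "u2 = vscale (- x / y) u1"
      using assms(3,4) by (auto simp: prod_eq_iff field_simps add_eq_0_iff)
    then show False
      using assms(2) unfolding parallel_def by blast
  qed
  then show ?thesis
    using assms(1,3,4) by (auto simp: prod_eq_iff)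
qed

section \<open>The field with \<open>2^n\<close> elements and a trace-dual basis\<close>

lemma finite_field_power_card: "(x::'a::{field,finite}) ^ CARD('a) = x"
proof (cases "x = 0")
  case True
  then show ?thesis by simp
next
  case False
  define N where "N = UNIV - {0::'a}"
  have "prod (\<lambda>y. y) N = prod (\<lambda>y. x * y) N"
    using False unfolding N_def
    by (intro prod.reindex_bij_witness[where i="\<lambda>y. x * y" and j="\<lambda>y. y / x"]) auto
  also have "\<dots> = x ^ card N * prod (\<lambda>y. y) N"
    by (simp add: prod.distrib)
  finally have "x ^ card N = 1"
    by (simp add: N_def)
  moreover have "CARD('a) = Suc (card N)"
    unfolding N_def by (simp add: card_Diff_subset Suc_diff_1)
  ultimately show ?thesis by simp
qed

locale trace_dual_basis =
  fixes n :: nat and \<omega> :: "nat \<Rightarrow> 'a::{field,finite}"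
  assumes card: "CARD('a) = 2 ^ n"
    and char2: "(1::'a) + 1 = 0"
    and dual_basis: "\<forall>i<n. \<forall>j<n. Tr n (\<omega> i * \<omega> j) = (if i = j then 1 else 0)"
begin

lemma two_eq_zero [simp]: "(2::'a) = 0"
  using char2 by simp

lemma add_self [simp]: "(x::'a) + x = 0"
proof -
  have "x + x = (1 + 1) * x" by (simp add: algebra_simps)
  then show ?thesis using char2 by simp
qed

lemma uminus_eq_self [simp]: "- (x::'a) = x"
  using minus_unique[OF add_self] .

lemma diff_eq_add: "(x::'a) - y = x + y"
  by simp

lemma eq_add_swap_iff: "((x::'a) = y + z) \<longleftrightarrow> (y = x + z)"
proof -
  have "x = y + z \<Longrightarrow> y = x + z" for x y
    by (simp add: add.assoc)
  then show ?thesis by blast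
qed

lemma add_eq_0_iff_eq: "((x::'a) + y = 0) \<longleftrightarrow> x = y"
  using eq_neg_iff_add_eq_0[of x y] by simp

lemma n_ge_1: "n \<ge> 1"
proof (rule ccontr)
  assume "\<not> n \<ge> 1"
  then have "CARD('a) = 1" using card by simp
  then obtain a :: 'a where "UNIV = {a}" by (rule card_1_singletonE)
  then have "(0::'a) = 1" by (metis UNIV_I singletonD)
  then show False by simp
qed

lemma square_add: "((x::'a) + y)^2 = x^2 + y^2"
  by (simp add: power2_eq_square algebra_simps flip: mult_2)

lemma power_two_power_add: "((x::'a) + y) ^ (2 ^ k) = x ^ (2 ^ k) + y ^ (2 ^ k)"
proof (induction k arbitrary: x y)
  case 0
  then show ?case by simp
next
  case (Suc k)
  have "(x + y) ^ (2 ^ Suc k) = ((x + y)^2) ^ (2 ^ k)"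
    by (simp add: power_mult[symmetric] mult.commute)
  also have "\<dots> = (x^2) ^ (2 ^ k) + (y^2) ^ (2 ^ k)"
    by (simp add: square_add Suc)
  also have "\<dots> = x ^ (2 ^ Suc k) + y ^ (2 ^ Suc k)"
    by (simp add: power_mult[symmetric] mult.commute)
  finally show ?case .
qed

lemma square_sum: "(\<Sum>k\<in>A. f k :: 'a)^2 = (\<Sum>k\<in>A. (f k)^2)"
  by (induction A rule: infinite_finite_induct) (simp_all add: square_add)

lemma power_two_power_n: "(x::'a) ^ (2 ^ n) = x"
  using finite_field_power_card[of x] card by simp

lemma Tr_add: "Tr n (x + y) = Tr n x + Tr n (y::'a)"
  by (simp add: Tr_def power_two_power_add sum.distrib)

lemma Tr_zero [simp]: "Tr n (0::'a) = 0"
  by (simp add: Tr_def zero_power)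

lemma Tr_sum: "Tr n (sum f A) = (\<Sum>i\<in>A. Tr n (f i :: 'a))"
  by (induction A rule: infinite_finite_induct) (simp_all add: Tr_add)

lemma Tr_square: "Tr n ((x::'a)^2) = Tr n x"
proof -
  have "Tr n (x^2) = (\<Sum>k<n. x ^ (2 ^ Suc k))"
    unfolding Tr_def by (simp add: power_mult[symmetric])
  moreover have "x + (\<Sum>k<n. x ^ (2 ^ Suc k)) = Tr n x + x ^ (2 ^ n)"
    unfolding Tr_def using sum.lessThan_Suc_shift[of "\<lambda>k. x ^ (2 ^ k)" n]
    by (simp add: sum.lessThan_Suc)
  ultimately show ?thesis
    using power_two_power_n by (simp add: add.commute)
qed

lemma Tr_zero_or_one: "Tr n (x::'a) = 0 \<or> Tr n x = 1"
proof -
  have "(Tr n x)^2 = Tr n (x^2)"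
    by (simp add: Tr_def square_sum power_mult[symmetric] mult.commute)
  then have "(Tr n x)^2 = Tr n x"
    by (simp add: Tr_square)
  then have "Tr n x * (Tr n x - 1) = 0"
    by (simp add: power2_eq_square algebra_simps)
  then show ?thesis by auto
qed

lemma Tr_one_nonzero: "Tr n (\<omega> 0 * \<omega> 0) \<noteq> 0"
  using dual_basis n_ge_1 by simp

abbreviation chi :: "'a \<Rightarrow> complex" where
  "chi x \<equiv> msign (Tr n x)"

lemma chi_add: "chi (x + y) = chi x * chi y"
  using Tr_zero_or_one[of x] Tr_zero_or_one[of y] char2 by (auto simp: msign_def Tr_add)

lemma chi_mult_self: "chi x * chi x = 1"
  by (simp add: msign_def)

lemma cnj_chi [simp]: "cnj (chi x) = chi x"
  by (simp add: msign_def)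

lemma norm_chi [simp]: "cmod (chi x) = 1"
  by (simp add: msign_def)

lemma sum_chi_mult: "(\<Sum>x\<in>UNIV. chi (a * x)) = (if a = 0 then of_nat CARD('a) else 0)"
proof (cases "a = 0")
  case True
  then show ?thesis by (simp add: msign_def)
next
  case False
  define t where "t = \<omega> 0 * \<omega> 0"
  have chi_t: "chi t = -1"
    using Tr_one_nonzero by (simp add: t_def msign_def)
  have "(\<Sum>x\<in>UNIV. chi x) = (\<Sum>x\<in>UNIV. chi (x + t))"
    by (intro sum.reindex_bij_witness[where i="\<lambda>x. x + t" and j="\<lambda>x. x + t"])
      (simp_all add: add.assoc)
  also have "\<dots> = - (\<Sum>x\<in>UNIV. chi x)"
    by (simp add: chi_add chi_t sum_negf)
  finally have "(\<Sum>x\<in>UNIV. chi x) = 0"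
    by simp
  moreover have "(\<Sum>x\<in>UNIV. chi (a * x)) = (\<Sum>x\<in>UNIV. chi x)"
    using False by (intro sum.reindex_bij_witness[where i="\<lambda>x. x / a" and j="\<lambda>x. a * x"]) auto
  ultimately show ?thesis
    using False by simp
qed

definition basis_sum :: "nat set \<Rightarrow> 'a" where
  "basis_sum S = (\<Sum>i\<in>S. \<omega> i)"

lemma Tr_basis_sum_mult:
  assumes "S \<subseteq> {..<n}" and "j < n"
  shows "Tr n (basis_sum S * \<omega> j) = (if j \<in> S then 1 else 0)"
proof -
  have "Tr n (basis_sum S * \<omega> j) = (\<Sum>i\<in>S. Tr n (\<omega> i * \<omega> j))"
    by (simp add: basis_sum_def sum_distrib_right Tr_sum)
  also have "\<dots> = (\<Sum>i\<in>S. if j = i then 1 else 0)"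
    using assms dual_basis by (intro sum.cong) auto
  also have "\<dots> = (if j \<in> S then 1 else 0)"
    using assms(1) finite_subset[OF assms(1)] by (simp add: sum.delta)
  finally show ?thesis .
qed

lemma inj_on_basis_sum: "inj_on basis_sum (Pow {..<n})"
proof (rule inj_onI)
  fix S T
  assume S: "S \<in> Pow {..<n}" and T: "T \<in> Pow {..<n}" and eq: "basis_sum S = basis_sum T"
  have "j \<in> S \<longleftrightarrow> j \<in> T" if "j < n" for j
    using Tr_basis_sum_mult[of S j] Tr_basis_sum_mult[of T j] S T that eq
    by (auto split: if_splits)
  then show "S = T" using S T by blast
qed

lemma basis_sum_surj: "basis_sum ` Pow {..<n} = UNIV"
proof -
  have "card (basis_sum ` Pow {..<n}) = card (UNIV :: 'a set)"
    using card_image[OF inj_on_basis_sum] by (simp add: card_Pow card)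
  then show ?thesis by (intro card_subset_eq) auto
qed

lemma dual_basis_expansion: "x = (\<Sum>i<n. Tr n (x * \<omega> i) * \<omega> i)"
proof -
  have "x \<in> basis_sum ` Pow {..<n}"
    using basis_sum_surj by simp
  then obtain S where S: "S \<subseteq> {..<n}" and x: "x = basis_sum S"
    by blast
  have "(\<Sum>i<n. Tr n (x * \<omega> i) * \<omega> i) = (\<Sum>i<n. if i \<in> S then \<omega> i else 0)"
    using Tr_basis_sum_mult[OF S] x by (intro sum.cong) auto
  also have "\<dots> = basis_sum S"
    using S by (simp add: basis_sum_def Int_absorb1 flip: sum.inter_restrict)
  finally show ?thesis using x by simp
qed

lemma Tr_mult_coords: "Tr n (x * y) = (\<Sum>i<n. Tr n (x * \<omega> i) * Tr n (y * \<omega> i))"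
proof -
  have "Tr n (x * y) = Tr n (\<Sum>i<n. Tr n (x * \<omega> i) * (\<omega> i * y))"
    by (subst dual_basis_expansion[of x]) (simp add: sum_distrib_right mult.assoc)
  also have "\<dots> = (\<Sum>i<n. Tr n (x * \<omega> i) * Tr n (\<omega> i * y))"
    unfolding Tr_sum
  proof (intro sum.cong refl)
    fix i
    show "Tr n (Tr n (x * \<omega> i) * (\<omega> i * y)) = Tr n (x * \<omega> i) * Tr n (\<omega> i * y)"
      using Tr_zero_or_one[of "x * \<omega> i"] by auto
  qed
  finally show ?thesis by (simp add: mult.commute)
qed

lemma coords_eq: "coords n \<omega> x i = (if i < n \<and> Tr n (x * \<omega> i) \<noteq> 0 then 1 else 0)"
proof -
  let ?z = "\<lambda>i. if i < n \<and> Tr n (x * \<omega> i) \<noteq> 0 then 1 else (0::int)"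
  have "coords n \<omega> x = ?z"
    unfolding coords_def
  proof (rule the_equality)
    have "(\<Sum>i<n. of_int (?z i) * \<omega> i) = (\<Sum>i<n. Tr n (x * \<omega> i) * \<omega> i)"
    proof (intro sum.cong refl)
      fix i assume "i \<in> {..<n}"
      then show "of_int (?z i) * \<omega> i = Tr n (x * \<omega> i) * \<omega> i"
        using Tr_zero_or_one[of "x * \<omega> i"] by auto
    qed
    then show "(\<forall>i<n. ?z i \<in> {0, 1}) \<and> (\<forall>i\<ge>n. ?z i = 0) \<and> x = (\<Sum>i<n. of_int (?z i) * \<omega> i)"
      using dual_basis_expansion[of x] by auto
  next
    fix z
    assume z: "(\<forall>i<n. z i \<in> {0::int, 1}) \<and> (\<forall>i\<ge>n. z i = 0) \<and> x = (\<Sum>i<n. of_int (z i) * \<omega> i)"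
    have "z j = ?z j" for j
    proof (cases "j < n")
      case False
      then show ?thesis using z by auto
    next
      case True
      have "Tr n (x * \<omega> j) = (\<Sum>i<n. Tr n (of_int (z i) * (\<omega> i * \<omega> j)))"
        using z by (simp add: sum_distrib_right Tr_sum mult.assoc)
      also have "\<dots> = (\<Sum>i<n. if j = i then of_int (z i) else 0)"
      proof (intro sum.cong refl)
        fix i assume "i \<in> {..<n}"
        then show "Tr n (of_int (z i) * (\<omega> i * \<omega> j)) = (if j = i then of_int (z i) else 0)"
          using z True dual_basis by auto
      qed
      also have "\<dots> = of_int (z j)"
        using True by simp
      finally show ?thesis
        using z True by auto
    qed
    then show "z = ?z" ..
  qed
  then show ?thesis by simp
qed

lemma msign_sum:
  assumes "finite A" and "\<forall>i\<in>A. c i = 0 \<or> c i = (1::'a)"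
  shows "msign (sum c A) = (\<Prod>i\<in>A. msign (c i))"
proof -
  have "(sum c A = 0 \<or> sum c A = 1) \<and> msign (sum c A) = (\<Prod>i\<in>A. msign (c i))"
    using assms
  proof (induction A rule: finite_induct)
    case empty
    then show ?case by (simp add: msign_def)
  next
    case (insert a A)
    then show ?case using char2 by (auto simp: msign_def)
  qed
  then show ?thesis ..
qed

lemma two_mult_half_card: "2 * (CARD('a) div 2) = CARD('a)"
proof -
  have "CARD('a) = 2 * 2 ^ (n - 1)"
    using card n_ge_1 by (simp add: power_eq_if)
  then show ?thesis by simp
qed

lemma fsqrt_power2: "fsqrt ((x::'a)^2) = x"
  unfolding fsqrt_def power_mult[symmetric] by (simp add: two_mult_half_card finite_field_power_card)

lemma power2_fsqrt: "(fsqrt x)^2 = (x::'a)"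
  unfolding fsqrt_def power_mult[symmetric] by (simp add: mult.commute two_mult_half_card finite_field_power_card)

lemma fsqrt_mult: "fsqrt (x * y) = fsqrt x * fsqrt (y::'a)"
  by (simp add: fsqrt_def power_mult_distrib)

lemma fsqrt_mult_square: "fsqrt (c * c * x) = c * fsqrt (x::'a)"
  using fsqrt_mult[of "c * c" x] fsqrt_power2[of c] by (simp add: power2_eq_square)

lemma fsqrt_zero [simp]: "fsqrt (0::'a) = 0"
proof -
  have "CARD('a) div 2 \<noteq> 0"
    using two_mult_half_card card by (metis mult_0_right power_not_zero zero_neq_numeral)
  then show ?thesis by (simp add: fsqrt_def)
qed

end

section \<open>The quadratic refinement \<open>i^h\<close> and the Weyl operators\<close>

locale split_setting = trace_dual_basis n \<omega> for n \<omega> +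
  fixes r :: "nat \<Rightarrow> int"
  assumes signs: "\<forall>i<n. r i = 1 \<or> r i = -1"
begin

abbreviation qref :: "'a \<Rightarrow> complex" where
  "qref x \<equiv> ipow (hZ4 n \<omega> r x)"

lemma qref_eq_prod: "qref x = (\<Prod>i<n. if Tr n (x * \<omega> i) \<noteq> 0 then ipow (r i) else 1)"
proof -
  have "hZ4 n \<omega> r x = (\<Sum>i<n. r i * (if Tr n (x * \<omega> i) \<noteq> 0 then 1 else 0)) mod 4"
    unfolding hZ4_def coords_eq by (intro arg_cong2[where f="(mod)"] sum.cong) auto
  then have "qref x = (\<Prod>i<n. ipow (r i * (if Tr n (x * \<omega> i) \<noteq> 0 then 1 else 0)))"
    by (simp add: ipow_mod4 ipow_sum)
  also have "\<dots> = (\<Prod>i<n. if Tr n (x * \<omega> i) \<noteq> 0 then ipow (r i) else 1)"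
    by (intro prod.cong) auto
  finally show ?thesis .
qed

lemma qref_zero [simp]: "qref 0 = 1"
  by (simp add: qref_eq_prod)

lemma qref_add: "qref (x + y) = qref x * qref y * chi (x * y)"
proof -
  define a where "a i = Tr n (x * \<omega> i)" for i
  define b where "b i = Tr n (y * \<omega> i)" for i
  have a01: "a i = 0 \<or> a i = 1" and b01: "b i = 0 \<or> b i = 1" for i
    unfolding a_def b_def by (rule Tr_zero_or_one)+
  then have ab01: "a i * b i = 0 \<or> a i * b i = 1" for i
    by (metis mult_1 mult_zero_left)
  have factor: "(if a i + b i \<noteq> 0 then ipow (r i) else 1) =
      (if a i \<noteq> 0 then ipow (r i) else 1) * (if b i \<noteq> 0 then ipow (r i) else 1) * msign (a i * b i)"
    if "i < n" for i
  proof -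
    have "ipow (r i) * ipow (r i) = -1"
      using signs that by (auto simp: ipow_1 ipow_minus1)
    then show ?thesis
      using a01[of i] b01[of i] char2 by (elim disjE) (simp_all add: msign_def)
  qed
  have "Tr n ((x + y) * \<omega> i) = a i + b i" for i
    by (simp add: a_def b_def distrib_right Tr_add)
  then have "qref (x + y) =
      (\<Prod>i<n. (if a i \<noteq> 0 then ipow (r i) else 1) * (if b i \<noteq> 0 then ipow (r i) else 1) * msign (a i * b i))"
    unfolding qref_eq_prod by (intro prod.cong refl) (simp add: factor)
  also have "\<dots> = qref x * qref y * (\<Prod>i<n. msign (a i * b i))"
    by (simp add: prod.distrib qref_eq_prod a_def b_def)
  also have "(\<Prod>i<n. msign (a i * b i)) = msign (\<Sum>i<n. a i * b i)"
    using ab01 by (simp add: msign_sum)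
  also have "(\<Sum>i<n. a i * b i) = Tr n (x * y)"
    unfolding a_def b_def by (rule Tr_mult_coords[symmetric])
  finally show ?thesis .
qed

lemma cnj_qref_mult: "cnj (qref x) * qref x = 1"
  by (rule cnj_ipow_mult)

lemma cnj_qref_eq_inverse: "cnj (qref x) = inverse (qref x)"
  using cnj_qref_mult[of x] by (simp add: field_simps)

lemma cnj_qref: "cnj (qref x) = qref x * chi (x^2)"
proof -
  have "1 = qref x * qref x * chi (x^2)"
    using qref_add[of x x] by (simp add: power2_eq_square)
  then have "cnj (qref x) = cnj (qref x) * qref x * (qref x * chi (x^2))"
    by (simp add: algebra_simps)
  then show ?thesis
    by (simp add: cnj_qref_mult)
qed

abbreviation wphase :: "'a vec \<Rightarrow> complex" where
  "wphase u \<equiv> qref (fsqrt (fst u * snd u))"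

lemma wphase_vscale: "wphase (vscale c u) = qref (c * fsqrt (fst u * snd u))"
proof -
  have "fsqrt (fst (vscale c u) * snd (vscale c u)) = c * fsqrt (fst u * snd u)"
    using fsqrt_mult_square[of c "fst u * snd u"] by (simp add: ac_simps)
  then show ?thesis by simp
qed

lemma Wop_eq_shift_op: "Wop n \<omega> r u = shift_op (fst u) (\<lambda>\<gamma>. wphase u * chi (snd u * \<gamma>))"
  by (simp add: Wop_def shift_op_def)

lemma Wop_unitary: "unitary_op (Wop n \<omega> r u)"
  unfolding Wop_eq_shift_op by (rule shift_op_unitary) (simp add: norm_mult)

lemma ipow_gZ4:
  "ipow (gZ4 n \<omega> r u v) = wphase (vadd u v) / (wphase u * wphase v) * chi (snd u * fst v)"
proof -
  have Bplus_diag: "Bplus w w = fst w * snd w" for w :: "'a vec"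
    by (simp add: Bplus_def Sform_def e1_def e2_def mult.commute)
  have Bplus_uv: "Bplus u v = snd u * fst v"
    by (simp add: Bplus_def Sform_def e1_def e2_def)
  have "ipow (2 * (if Tr n (Bplus u v) = 0 then 0 else 1)) = chi (snd u * fst v)"
    by (simp add: Bplus_uv msign_def ipow_2)
  then have "ipow (gZ4 n \<omega> r u v) =
      wphase (vadd u v) * cnj (wphase u) * cnj (wphase v) * chi (snd u * fst v)"
    unfolding gZ4_def ipow_mod4 ipow_add ipow_diff Bplus_diag by simp
  then show ?thesis
    by (simp add: cnj_qref_eq_inverse field_simps)
qed

lemma proj_unitary_rep_Wop: "proj_unitary_rep (Wop n \<omega> r) (\<lambda>u v. ipow (gZ4 n \<omega> r u v))"
  unfolding proj_unitary_rep_def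
proof (intro conjI allI)
  fix u v :: "'a vec"
  have "wphase (vadd u v) * chi ((snd u + snd v) * \<gamma>) =
      ipow (gZ4 n \<omega> r u v) * (wphase u * chi (snd u * (\<gamma> + fst v)) * (wphase v * chi (snd v * \<gamma>)))"
    for \<gamma>
    using chi_mult_self[of "snd u * fst v"]
    by (simp add: ipow_gZ4 distrib_left distrib_right chi_add field_simps)
  then show "Wop n \<omega> r (vadd u v) = (\<lambda>\<delta> \<gamma>. ipow (gZ4 n \<omega> r u v) * opmult (Wop n \<omega> r u) (Wop n \<omega> r v) \<delta> \<gamma>)"
    unfolding Wop_eq_shift_op opmult_shift_op by (auto simp: shift_op_def intro!: ext)
qed (simp_all add: Wop_unitary)

lemma weyl_multiplier_gZ4: "weyl_multiplier n (\<lambda>u v. ipow (gZ4 n \<omega> r u v))"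
  unfolding weyl_multiplier_def
proof (intro conjI allI impI)
  fix u v w :: "'a vec"
  have "vadd (vadd u v) w = vadd u (vadd v w)"
    by (simp add: vadd_def add.assoc)
  moreover have "chi (snd u * fst v) * chi ((snd u + snd v) * fst w) =
      chi (snd u * (fst v + fst w)) * chi (snd v * fst w)"
    by (simp add: distrib_left distrib_right chi_add)
  ultimately show "ipow (gZ4 n \<omega> r u v) * ipow (gZ4 n \<omega> r (vadd u v) w) =
      ipow (gZ4 n \<omega> r u (vadd v w)) * ipow (gZ4 n \<omega> r v w)"
    unfolding ipow_gZ4 by (simp add: field_simps)
next
  fix d1 d2 :: "'a vec"
  assume "\<exists>u a b. d1 = vscale a u \<and> d2 = vscale b u"
  then obtain u a b where d1: "d1 = vscale a u" and d2: "d2 = vscale b u"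
    by blast
  define s where "s = fsqrt (fst u * snd u)"
  have "s * s = fst u * snd u"
    using power2_fsqrt[of "fst u * snd u"] by (simp add: s_def power2_eq_square)
  then have "a * s * (b * s) = snd d1 * fst d2"
    by (simp add: d1 d2 algebra_simps)
  then have "qref ((a + b) * s) = qref (a * s) * qref (b * s) * chi (snd d1 * fst d2)"
    using qref_add[of "a * s" "b * s"] by (simp add: distrib_right)
  moreover have "vadd d1 d2 = vscale (a + b) u"
    by (simp add: d1 d2 vadd_def vscale_def distrib_right)
  ultimately show "ipow (gZ4 n \<omega> r d1 d2) = 1"
    using chi_mult_self[of "snd d1 * fst d2"]
    unfolding ipow_gZ4 by (simp only: d1 d2 wphase_vscale s_def[symmetric]) (simp add: field_simps)
next
  fix u v :: "'a vec"
  have "vadd v u = vadd u v"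
    by (simp add: vadd_def add.commute)
  moreover have "Sform u v = snd u * fst v + snd v * fst u"
    by (simp add: Sform_def mult.commute add.commute)
  ultimately show "cnj (ipow (gZ4 n \<omega> r u v)) * ipow (gZ4 n \<omega> r v u) = msign (Tr n (Sform u v))"
    unfolding ipow_gZ4 by (simp add: cnj_qref_eq_inverse chi_add field_simps)
qed simp

section \<open>The quadrature system\<close>

lemma Qrep_reparam:
  assumes "c \<noteq> 0"
  shows "Qrep n \<omega> r (vadd v (vscale t u)) (vscale c u) = Qrep n \<omega> r v u"
proof (intro ext)
  fix \<delta> \<gamma> :: 'a
  define F where "F \<mu> = (if \<delta> = \<gamma> + \<mu> * fst u then
      qref (\<mu> * fsqrt (fst u * snd u)) * chi (\<mu> * (snd u * (fst v + \<gamma>) + fst u * snd v)) else 0)"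
    for \<mu>
  have "Qrep n \<omega> r (vadd v (vscale t u)) (vscale c u) \<delta> \<gamma> = 1 / of_nat CARD('a) * (\<Sum>\<mu>\<in>UNIV. F (\<mu> * c))"
    unfolding Qrep_def
  proof (intro arg_cong2[where f="(*)"] refl sum.cong)
    fix \<mu> :: 'a
    have s: "fsqrt (c * fst u * (c * snd u)) = c * fsqrt (fst u * snd u)"
      using fsqrt_mult_square[of c "fst u * snd u"] by (simp add: ac_simps)
    \<comment> \<open>the shift along the line contributes \<open>2 \<mu> c t \<alpha>_1 \<alpha>_2 = 0\<close>\<close>
    have a: "\<mu> * (c * snd u * (fst v + t * fst u + \<gamma>) + c * fst u * (snd v + t * snd u)) =
        \<mu> * c * (snd u * (fst v + \<gamma>) + fst u * snd v) + (\<mu> * c * t * (fst u * snd u) + \<mu> * c * t * (fst u * snd u))"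
      by (simp add: algebra_simps)
    show "(if \<delta> = \<gamma> + \<mu> * fst (vscale c u) then
          qref (\<mu> * fsqrt (fst (vscale c u) * snd (vscale c u))) *
          chi (\<mu> * (snd (vscale c u) * (fst (vadd v (vscale t u)) + \<gamma>) + fst (vscale c u) * snd (vadd v (vscale t u))))
         else 0) = F (\<mu> * c)"
      unfolding F_def fst_vscale snd_vscale fst_vadd snd_vadd s a add_self add_0_right
      by (simp add: ac_simps)
  qed
  also have "\<dots> = 1 / of_nat CARD('a) * (\<Sum>\<mu>\<in>UNIV. F \<mu>)"
    using assms by (simp add: sum.reindex_bij_witness[where i="\<lambda>\<mu>. \<mu> / c" and j="\<lambda>\<mu>. \<mu> * c"])
  also have "\<dots> = Qrep n \<omega> r v u \<delta> \<gamma>"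
    unfolding Qrep_def F_def ..
  finally show "Qrep n \<omega> r (vadd v (vscale t u)) (vscale c u) \<delta> \<gamma> = Qrep n \<omega> r v u \<delta> \<gamma>" .
qed

lemma Qrep_eq_if_line_eq:
  assumes "u' \<noteq> (0,0)" and "line v u = line v' u'"
  shows "Qrep n \<omega> r v u = Qrep n \<omega> r v' u'"
  using assms by (rule line_eq_imp_reparam) (simp add: Qrep_reparam)

lemma Qline_line:
  assumes "u \<noteq> (0,0)"
  shows "Qline n \<omega> r (line v u) = Qrep n \<omega> r v u"
proof -
  define p where "p = (SOME p. snd p \<noteq> (0,0) \<and> line v u = line (fst p) (snd p))"
  have "\<exists>p. snd p \<noteq> (0,0) \<and> line v u = line (fst p) (snd p)"
    using assms by (intro exI[of _ "(v, u)"]) simp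
  then have "snd p \<noteq> (0,0) \<and> line v u = line (fst p) (snd p)"
    unfolding p_def by (rule someI_ex)
  then have "Qrep n \<omega> r v u = Qrep n \<omega> r (fst p) (snd p)"
    by (intro Qrep_eq_if_line_eq) simp_all
  then show ?thesis
    unfolding Qline_def p_def[symmetric] Let_def by simp
qed

definition Qvec :: "'a vec \<Rightarrow> 'a vec \<Rightarrow> 'a \<Rightarrow> complex" where
  "Qvec v u \<delta> = (if fst u = 0 then (if \<delta> = fst v then 1 else 0)
     else complex_of_real (1 / sqrt (real CARD('a))) *
       qref (\<delta> / fst u * fsqrt (fst u * snd u)) * chi (\<delta> / fst u * (snd u * fst v + fst u * snd v)))"

lemma norm_Qvec: "(\<Sum>\<delta>\<in>UNIV. (cmod (Qvec v u \<delta>))^2) = 1"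
proof (cases "fst u = 0")
  case True
  then have "(\<Sum>\<delta>\<in>UNIV. (cmod (Qvec v u \<delta>))^2) = (\<Sum>\<delta>\<in>UNIV. if \<delta> = fst v then 1 else 0)"
    by (intro sum.cong) (auto simp: Qvec_def)
  then show ?thesis by simp
next
  case False
  then have "(\<Sum>\<delta>\<in>UNIV. (cmod (Qvec v u \<delta>))^2) = (\<Sum>\<delta>\<in>(UNIV::'a set). (1 / sqrt (real CARD('a)))^2)"
    by (intro sum.cong) (simp_all add: Qvec_def norm_mult norm_divide)
  then show ?thesis by (simp add: power_divide)
qed

lemma Qrep_vertical:
  assumes "fst u = 0" and "snd u \<noteq> 0"
  shows "Qrep n \<omega> r v u \<delta> \<gamma> = Qvec v u \<delta> * cnj (Qvec v u \<gamma>)"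
proof -
  have "Qrep n \<omega> r v u \<delta> \<gamma> =
      1 / of_nat CARD('a) * (\<Sum>\<mu>\<in>UNIV. if \<delta> = \<gamma> then chi ((snd u * (fst v + \<gamma>)) * \<mu>) else 0)"
    unfolding Qrep_def using assms(1) by (intro arg_cong2[where f="(*)"] sum.cong) (simp_all add: mult.commute)
  moreover have "snd u * (fst v + \<gamma>) = 0 \<longleftrightarrow> \<gamma> = fst v"
    using assms(2) add_eq_0_iff_eq[of "fst v" \<gamma>] by auto
  ultimately show ?thesis
    using assms(1) sum_chi_mult[of "snd u * (fst v + \<gamma>)"] by (cases "\<delta> = \<gamma>") (auto simp: Qvec_def)
qed

lemma Qrep_nonvertical_entry:
  assumes "fst u \<noteq> 0"
  shows "Qrep n \<omega> r v u \<delta> \<gamma> = 1 / of_nat CARD('a) *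
    (qref ((\<delta> / fst u + \<gamma> / fst u) * fsqrt (fst u * snd u)) *
     chi ((\<delta> / fst u + \<gamma> / fst u) * (snd u * (fst v + \<gamma>) + fst u * snd v)))"
proof -
  \<comment> \<open>only \<open>\<mu> = (\<delta> + \<gamma>) / \<alpha>_1\<close> contributes to the sum defining \<open>Q\<close>\<close>
  have "\<delta> = \<gamma> + \<mu> * fst u \<longleftrightarrow> \<mu> = \<delta> / fst u + \<gamma> / fst u" for \<mu>
  proof -
    have "\<delta> = \<gamma> + \<mu> * fst u \<longleftrightarrow> \<mu> * fst u = \<delta> + \<gamma>"
      using eq_add_swap_iff[of \<delta> "\<mu> * fst u" \<gamma>] by (simp add: add.commute)
    then show ?thesis
      using assms by (auto simp: eq_divide_eq simp flip: add_divide_distrib)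
  qed
  then show ?thesis
    unfolding Qrep_def by simp
qed

lemma Qrep_nonvertical:
  assumes "fst u \<noteq> 0"
  shows "Qrep n \<omega> r v u \<delta> \<gamma> = Qvec v u \<delta> * cnj (Qvec v u \<gamma>)"
proof -
  define a s K where "a = fst u" and "s = fsqrt (fst u * snd u)" and "K = snd u * fst v + fst u * snd v"
  define x y where "x = \<delta> / a" and "y = \<gamma> / a"
  define X Y where "X = x * y * (fst u * snd u)" and "Y = y * y * (fst u * snd u)"
  have ss: "s * s = fst u * snd u"
    using power2_fsqrt[of "fst u * snd u"] by (simp add: s_def power2_eq_square)
  have "Qrep n \<omega> r v u \<delta> \<gamma> = 1 / of_nat CARD('a) *
      (qref ((x + y) * s) * chi ((x + y) * (snd u * (fst v + \<gamma>) + fst u * snd v)))"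
    unfolding x_def y_def a_def s_def by (rule Qrep_nonvertical_entry[OF assms])
  also have "\<dots> = 1 / of_nat CARD('a) *
      (qref (x * s) * qref (y * s) * chi X * (chi (x * K) * chi (y * K) * chi X * chi Y))"
  proof -
    have "x * s * (y * s) = X"
      unfolding X_def ss[symmetric] by (simp only: ac_simps)
    then have "qref ((x + y) * s) = qref (x * s) * qref (y * s) * chi X"
      by (simp only: distrib_right qref_add)
    moreover have "(x + y) * (snd u * (fst v + \<gamma>) + fst u * snd v) = (x * K + y * K) + (X + Y)"
      using assms by (simp add: y_def X_def Y_def K_def a_def algebra_simps)
    ultimately show ?thesis
      by (simp only: chi_add ac_simps)
  qed
  also have "\<dots> = 1 / of_nat CARD('a) * (qref (x * s) * qref (y * s) * (chi (x * K) * chi (y * K) * chi Y))"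
    using chi_mult_self[of X] by (simp add: ac_simps)
  also have "\<dots> = Qvec v u \<delta> * cnj (Qvec v u \<gamma>)"
  proof -
    have "cnj (qref (y * s)) = qref (y * s) * chi Y"
      unfolding cnj_qref by (simp add: Y_def power2_eq_square ss[symmetric] ac_simps)
    moreover have "complex_of_real (1 / sqrt (real CARD('a))) * complex_of_real (1 / sqrt (real CARD('a)))
        = 1 / of_nat CARD('a)"
      by (simp flip: of_real_mult)
    ultimately show ?thesis
      using assms unfolding Qvec_def s_def[symmetric] K_def[symmetric]
      unfolding a_def[symmetric] unfolding x_def[symmetric] y_def[symmetric]
      by (simp add: ac_simps)
  qed
  finally show ?thesis .
qed

lemma rank_one_proj_Qrep:
  assumes "u \<noteq> (0,0)"
  shows "rank_one_proj (Qrep n \<omega> r v u)"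
proof -
  have "Qrep n \<omega> r v u \<delta> \<gamma> = Qvec v u \<delta> * cnj (Qvec v u \<gamma>)" for \<delta> \<gamma>
  proof (cases "fst u = 0")
    case True
    then have "snd u \<noteq> 0"
      using assms by (simp add: prod_eq_iff)
    with True show ?thesis by (rule Qrep_vertical)
  qed (rule Qrep_nonvertical)
  then have "Qrep n \<omega> r v u = (\<lambda>\<delta> \<gamma>. Qvec v u \<delta> * cnj (Qvec v u \<gamma>))"
    by (intro ext)
  then show ?thesis
    unfolding rank_one_proj_def using norm_Qvec by blast
qed

subsection \<open>Orthogonality relations\<close>

definition Qentry :: "'a vec \<Rightarrow> 'a vec \<Rightarrow> 'a \<Rightarrow> 'a \<Rightarrow> complex" where
  "Qentry v u \<mu> \<gamma> = 1 / of_nat CARD('a) *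
     (qref (\<mu> * fsqrt (fst u * snd u)) * chi (\<mu> * (snd u * (fst v + \<gamma>) + fst u * snd v)))"

lemma Qrep_eq_opsum: "Qrep n \<omega> r v u = opsum UNIV (\<lambda>\<mu>. shift_op (\<mu> * fst u) (Qentry v u \<mu>))"
  unfolding Qrep_def opsum_def shift_op_def Qentry_def sum_distrib_left
  by (intro ext sum.cong refl) simp

lemma sum_Qentry_mult_eq_0:
  assumes "x * snd u1 + y * snd u2 \<noteq> 0"
  shows "(\<Sum>\<gamma>\<in>UNIV. Qentry v1 u1 x (\<gamma> + y * fst u2) * Qentry v2 u2 y \<gamma>) = 0"
proof -
  define C where "C = Qentry v1 u1 x (y * fst u2) * Qentry v2 u2 y 0"
  have "Qentry v1 u1 x (\<gamma> + y * fst u2) * Qentry v2 u2 y \<gamma> = C * chi ((x * snd u1 + y * snd u2) * \<gamma>)"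
    for \<gamma>
  proof -
    have "x * (snd u1 * (fst v1 + (\<gamma> + y * fst u2)) + fst u1 * snd v1) =
        x * (snd u1 * (fst v1 + y * fst u2) + fst u1 * snd v1) + x * snd u1 * \<gamma>"
      and "y * (snd u2 * (fst v2 + \<gamma>) + fst u2 * snd v2) = y * (snd u2 * fst v2 + fst u2 * snd v2) + y * snd u2 * \<gamma>"
      and "(x * snd u1 + y * snd u2) * \<gamma> = x * snd u1 * \<gamma> + y * snd u2 * \<gamma>"
      by (simp_all add: algebra_simps)
    then show ?thesis
      unfolding Qentry_def C_def by (simp add: chi_add ac_simps)
  qed
  then have "(\<Sum>\<gamma>\<in>UNIV. Qentry v1 u1 x (\<gamma> + y * fst u2) * Qentry v2 u2 y \<gamma>) =
      C * (\<Sum>\<gamma>\<in>UNIV. chi ((x * snd u1 + y * snd u2) * \<gamma>))"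
    by (simp add: sum_distrib_left)
  then show ?thesis
    using assms by (simp add: sum_chi_mult)
qed

lemma optrace_Qrep_mult:
  assumes u1: "u1 \<noteq> (0,0)" and np: "\<not> parallel u1 u2"
  shows "optrace (opmult (Qrep n \<omega> r v1 u1) (Qrep n \<omega> r v2 u2)) = 1 / of_nat CARD('a)"
proof -
  define F where "F x y = (if x * fst u1 + y * fst u2 = 0 then
      (\<Sum>\<gamma>\<in>UNIV. Qentry v1 u1 x (\<gamma> + y * fst u2) * Qentry v2 u2 y \<gamma>) else 0)" for x y
  have "optrace (opmult (Qrep n \<omega> r v1 u1) (Qrep n \<omega> r v2 u2)) = (\<Sum>y\<in>UNIV. \<Sum>x\<in>UNIV. F x y)"
    unfolding Qrep_eq_opsum
    by (simp add: opmult_opsum_left opmult_opsum_right optrace_opsum opmult_shift_op optrace_shift_op F_def)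
  also have "\<dots> = (\<Sum>x\<in>UNIV. \<Sum>y\<in>UNIV. F x y)"
    by (rule sum.swap)
  \<comment> \<open>for non-parallel directions only the term \<open>x = y = 0\<close> survives\<close>
  also have "\<dots> = F 0 0"
  proof (rule sum_sum_eq_at_zero)
    fix x y :: 'a
    assume "(x, y) \<noteq> (0, 0)"
    then have "x * fst u1 + y * fst u2 = 0 \<Longrightarrow> x * snd u1 + y * snd u2 \<noteq> 0"
      using nonparallel_independent[OF u1 np] by blast
    then show "F x y = 0"
      by (auto simp: F_def sum_Qentry_mult_eq_0)
  qed
  also have "\<dots> = 1 / of_nat CARD('a)"
    by (simp add: F_def Qentry_def msign_def)
  finally show ?thesis .
qed

lemma sum_shift_op_Qentry_translates:
  assumes u: "u \<noteq> (0,0)"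
  shows "(\<Sum>v\<in>UNIV. shift_op (\<mu> * fst u) (Qentry v u \<mu>) \<delta> \<gamma>) =
    (if \<mu> = 0 then of_nat CARD('a) * idop \<delta> \<gamma> else 0)"
proof -
  define q :: complex where "q = of_nat CARD('a)"
  have sum_pairs: "(\<Sum>v\<in>UNIV. G v) = (\<Sum>b1\<in>UNIV. \<Sum>b2\<in>UNIV. G (b1, b2))" for G :: "'a vec \<Rightarrow> complex"
    by (simp add: sum.cartesian_product)
  show ?thesis
  proof (cases "\<mu> = 0")
    case True
    then have "(\<Sum>v\<in>UNIV. shift_op (\<mu> * fst u) (Qentry v u \<mu>) \<delta> \<gamma>) =
        (\<Sum>b1\<in>(UNIV::'a set). \<Sum>b2\<in>(UNIV::'a set). 1 / q * idop \<delta> \<gamma>)"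
      unfolding sum_pairs by (simp add: shift_op_def Qentry_def idop_def q_def msign_def)
    then show ?thesis
      using True by (simp add: q_def)
  next
    case False
    \<comment> \<open>summing over \<open>v = (\<beta>_1, \<beta>_2)\<close> factorises into two character sums, one of which vanishes\<close>
    define C where "C = (if \<delta> = \<gamma> + \<mu> * fst u then
        1 / q * qref (\<mu> * fsqrt (fst u * snd u)) * chi (\<mu> * snd u * \<gamma>) else 0)"
    have "shift_op (\<mu> * fst u) (Qentry (b1, b2) u \<mu>) \<delta> \<gamma> =
        C * (chi ((\<mu> * snd u) * b1) * chi ((\<mu> * fst u) * b2))" for b1 b2
    proof -
      have "\<mu> * (snd u * (b1 + \<gamma>) + fst u * b2) = \<mu> * snd u * \<gamma> + \<mu> * snd u * b1 + \<mu> * fst u * b2"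
        by (simp add: algebra_simps)
      then show ?thesis
        by (simp add: shift_op_def Qentry_def C_def chi_add q_def ac_simps)
    qed
    then have "(\<Sum>v\<in>UNIV. shift_op (\<mu> * fst u) (Qentry v u \<mu>) \<delta> \<gamma>) =
        C * ((\<Sum>b1\<in>UNIV. chi ((\<mu> * snd u) * b1)) * (\<Sum>b2\<in>UNIV. chi ((\<mu> * fst u) * b2)))"
      unfolding sum_pairs sum_product by (simp add: sum_distrib_left)
    also have "\<dots> = 0"
      using False u by (auto simp: sum_chi_mult prod_eq_iff)
    finally show ?thesis
      using False by simp
  qed
qed

lemma sum_Qrep_translates:
  assumes "u \<noteq> (0,0)"
  shows "(\<Sum>v\<in>UNIV. Qrep n \<omega> r v u \<delta> \<gamma>) = of_nat CARD('a) * idop \<delta> \<gamma>"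
proof -
  have "(\<Sum>v\<in>UNIV. Qrep n \<omega> r v u \<delta> \<gamma>) = (\<Sum>\<mu>\<in>UNIV. \<Sum>v\<in>UNIV. shift_op (\<mu> * fst u) (Qentry v u \<mu>) \<delta> \<gamma>)"
    unfolding Qrep_eq_opsum opsum_def by (rule sum.swap)
  then show ?thesis
    by (simp add: sum_shift_op_Qentry_translates[OF assms])
qed

lemma opsum_parallel_Qline:
  assumes u: "u \<noteq> (0,0)"
  shows "opsum {line v u | v. True} (Qline n \<omega> r) = idop"
proof (intro ext)
  fix \<delta> \<gamma>
  have parallels: "{line v u | v. True} = range (\<lambda>v. line v u)"
    by auto
  have "of_nat CARD('a) * idop \<delta> \<gamma> = (\<Sum>v\<in>UNIV. Qrep n \<omega> r v u \<delta> \<gamma>)"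
    using sum_Qrep_translates[OF u] by simp
  also have "\<dots> = (\<Sum>L\<in>(\<lambda>v. line v u) ` UNIV. \<Sum>v\<in>{v. v \<in> UNIV \<and> line v u = L}. Qrep n \<omega> r v u \<delta> \<gamma>)"
    by (rule sum.image_gen) simp
  \<comment> \<open>each line parallel to \<open>u\<close> has \<open>|F|\<close> base points, all giving the same operator\<close>
  also have "\<dots> = (\<Sum>L\<in>(\<lambda>v. line v u) ` UNIV. of_nat CARD('a) * Qline n \<omega> r L \<delta> \<gamma>)"
  proof (rule sum.cong[OF refl])
    fix L
    assume "L \<in> (\<lambda>v. line v u) ` UNIV"
    then obtain v0 where L: "L = line v0 u" by blast
    have "(\<Sum>v\<in>{v. v \<in> UNIV \<and> line v u = L}. Qrep n \<omega> r v u \<delta> \<gamma>) = (\<Sum>v\<in>line v0 u. Qline n \<omega> r L \<delta> \<gamma>)"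
    proof (rule sum.cong)
      show "{v. v \<in> UNIV \<and> line v u = L} = line v0 u"
        using line_eq_iff_mem[of _ u v0] L by auto
    next
      fix v
      assume "v \<in> line v0 u"
      then have "line v u = L"
        using line_eq_iff_mem[of v u v0] L by simp
      then show "Qrep n \<omega> r v u \<delta> \<gamma> = Qline n \<omega> r L \<delta> \<gamma>"
        using Qline_line[OF u, of v] by simp
    qed
    also have "\<dots> = of_nat CARD('a) * Qline n \<omega> r L \<delta> \<gamma>"
      using card_line[OF u] by simp
    finally show "(\<Sum>v\<in>{v. v \<in> UNIV \<and> line v u = L}. Qrep n \<omega> r v u \<delta> \<gamma>) =
        of_nat CARD('a) * Qline n \<omega> r L \<delta> \<gamma>" .
  qed
  also have "\<dots> = of_nat CARD('a) * opsum {line v u | v. True} (Qline n \<omega> r) \<delta> \<gamma>"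
    unfolding opsum_def parallels by (simp add: sum_distrib_left)
  finally show "opsum {line v u | v. True} (Qline n \<omega> r) \<delta> \<gamma> = idop \<delta> \<gamma>"
    by simp
qed

theorem quadrature_system_Qline: "quadrature_system (Qline n \<omega> r)"
  unfolding quadrature_system_def
proof (intro conjI allI impI)
  fix l :: "'a vec set"
  assume "is_line l"
  then obtain v u where "u \<noteq> (0,0)" and "l = line v u"
    by (auto simp: is_line_def)
  then show "rank_one_proj (Qline n \<omega> r l)"
    by (simp add: Qline_line rank_one_proj_Qrep)
next
  fix v1 u1 v2 u2 :: "'a vec"
  assume "u1 \<noteq> (0,0)" "u2 \<noteq> (0,0)" "\<not> parallel u1 u2"
  then show "optrace (opmult (Qline n \<omega> r (line v1 u1)) (Qline n \<omega> r (line v2 u2))) = 1 / of_nat CARD('a)"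
    by (simp add: Qline_line optrace_Qrep_mult)
qed (rule opsum_parallel_Qline)

subsection \<open>Covariance\<close>

lemma Qrep_translate_entries:
  "chi (snd w * (\<delta> + \<gamma>)) * Qrep n \<omega> r v u (\<delta> + fst w) (\<gamma> + fst w) = Qrep n \<omega> r (vadd v w) u \<delta> \<gamma>"
  unfolding Qrep_def mult.left_commute[of "chi _"] sum_distrib_left
proof (intro arg_cong2[where f="(*)"] refl sum.cong)
  fix \<mu>
  define a b where "a = fst w" and "b = snd w"
  show "chi (b * (\<delta> + \<gamma>)) * (if \<delta> + a = \<gamma> + a + \<mu> * fst u
        then qref (\<mu> * fsqrt (fst u * snd u)) * chi (\<mu> * (snd u * (fst v + (\<gamma> + a)) + fst u * snd v)) else 0) =
      (if \<delta> = \<gamma> + \<mu> * fst u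
        then qref (\<mu> * fsqrt (fst u * snd u)) * chi (\<mu> * (snd u * (fst (vadd v w) + \<gamma>) + fst u * snd (vadd v w)))
        else 0)"
  proof (cases "\<delta> = \<gamma> + \<mu> * fst u")
    case True
    then have "\<delta> + \<gamma> = \<mu> * fst u"
      by (simp add: add.commute add.left_commute)
    moreover have "\<mu> * (snd u * (fst (vadd v w) + \<gamma>) + fst u * snd (vadd v w)) =
        \<mu> * (snd u * (fst v + (\<gamma> + a)) + fst u * snd v) + b * (\<mu> * fst u)"
      by (simp add: a_def b_def algebra_simps)
    ultimately show ?thesis
      using True by (simp add: chi_add ac_simps)
  next
    case False
    then show ?thesis
      by (simp add: add.commute add.left_commute)
  qed
qed

lemma Wop_conj_Qrep:
  "opmult (opmult (Wop n \<omega> r w) (Qrep n \<omega> r v u)) (adj (Wop n \<omega> r w)) = Qrep n \<omega> r (vadd v w) u"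
proof (intro ext)
  fix \<delta> \<gamma> :: 'a
  define a b where "a = fst w" and "b = snd w"
  have "b * (\<delta> + a) + b * (\<gamma> + a) = b * (\<delta> + \<gamma>) + (b * a + b * a)"
    by (simp add: algebra_simps)
  then have "chi (b * (\<delta> + a)) * chi (b * (\<gamma> + a)) = chi (b * (\<delta> + \<gamma>))"
    by (simp flip: chi_add)
  moreover have "wphase w * cnj (wphase w) = 1"
    using cnj_qref_mult by (simp add: mult.commute)
  ultimately have "opmult (opmult (Wop n \<omega> r w) (Qrep n \<omega> r v u)) (adj (Wop n \<omega> r w)) \<delta> \<gamma> =
      chi (b * (\<delta> + \<gamma>)) * Qrep n \<omega> r v u (\<delta> + a) (\<gamma> + a)"
    unfolding Wop_eq_shift_op shift_op_conj diff_eq_add a_def b_def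
    by (simp add: ac_simps)
  then show "opmult (opmult (Wop n \<omega> r w) (Qrep n \<omega> r v u)) (adj (Wop n \<omega> r w)) \<delta> \<gamma> =
      Qrep n \<omega> r (vadd v w) u \<delta> \<gamma>"
    by (simp add: a_def b_def Qrep_translate_entries)
qed

lemma Uop_conj_Qrep:
  assumes "c \<noteq> 0"
  shows "opmult (opmult (Uop c) (Qrep n \<omega> r v u)) (adj (Uop c)) = Qrep n \<omega> r (torus_act c v) (torus_act c u)"
proof (intro ext)
  fix \<delta> \<gamma> :: 'a
  show "opmult (opmult (Uop c) (Qrep n \<omega> r v u)) (adj (Uop c)) \<delta> \<gamma> =
      Qrep n \<omega> r (torus_act c v) (torus_act c u) \<delta> \<gamma>"
    unfolding Uop_conj[OF assms] Qrep_def
  proof (intro arg_cong2[where f="(*)"] refl sum.cong)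
    fix \<mu> :: 'a
    have "(\<delta> / c = \<gamma> / c + \<mu> * fst u) = (\<delta> = \<gamma> + \<mu> * fst (torus_act c u))"
      and "fst (torus_act c u) * snd (torus_act c u) = fst u * snd u"
      and "\<mu> * (snd u * (fst v + \<gamma> / c) + fst u * snd v) =
        \<mu> * (snd (torus_act c u) * (fst (torus_act c v) + \<gamma>) + fst (torus_act c u) * snd (torus_act c v))"
      using assms by (auto simp: torus_act_def field_simps)
    then show "(if \<delta> / c = \<gamma> / c + \<mu> * fst u then qref (\<mu> * fsqrt (fst u * snd u)) *
          chi (\<mu> * (snd u * (fst v + \<gamma> / c) + fst u * snd v)) else 0) =
        (if \<delta> = \<gamma> + \<mu> * fst (torus_act c u) then qref (\<mu> * fsqrt (fst (torus_act c u) * snd (torus_act c u))) *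
          chi (\<mu> * (snd (torus_act c u) * (fst (torus_act c v) + \<gamma>) + fst (torus_act c u) * snd (torus_act c v)))
         else 0)"
      by (simp only:)
  qed
qed

lemma Wop_conj_Qline:
  assumes "is_line l"
  shows "opmult (opmult (Wop n \<omega> r w) (Qline n \<omega> r l)) (adj (Wop n \<omega> r w)) = Qline n \<omega> r (translate l w)"
proof -
  obtain v u where "u \<noteq> (0,0)" and "l = line v u"
    using assms by (auto simp: is_line_def)
  then show ?thesis
    by (simp add: Qline_line translate_line Wop_conj_Qrep)
qed

lemma Uop_conj_Qline:
  assumes "c \<noteq> 0" and "is_line l"
  shows "opmult (opmult (Uop c) (Qline n \<omega> r l)) (adj (Uop c)) = Qline n \<omega> r (line_act c l)"
proof -
  obtain v u where "u \<noteq> (0,0)" and "l = line v u"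
    using assms(2) by (auto simp: is_line_def)
  then show ?thesis
    using assms(1) by (simp add: Qline_line line_act_line torus_act_nonzero Uop_conj_Qrep)
qed

lemma is_line_translate:
  assumes "is_line l"
  shows "is_line (translate l w)"
proof -
  obtain v u where "u \<noteq> (0,0)" and "l = line v u"
    using assms by (auto simp: is_line_def)
  then show ?thesis
    unfolding is_line_def by (intro exI[of _ "vadd v w"] exI[of _ u]) (simp add: translate_line)
qed

lemma Uop_Wop_conj_Qline:
  assumes "c \<noteq> 0" and "is_line l"
  shows "opmult (opmult (opmult (Uop c) (Wop n \<omega> r w)) (Qline n \<omega> r l)) (adj (opmult (Uop c) (Wop n \<omega> r w)))
    = Qline n \<omega> r (line_act c (translate l w))"
proof -
  have "opmult (opmult (opmult (Uop c) (Wop n \<omega> r w)) (Qline n \<omega> r l)) (adj (opmult (Uop c) (Wop n \<omega> r w))) =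
      opmult (opmult (Uop c) (opmult (opmult (Wop n \<omega> r w) (Qline n \<omega> r l)) (adj (Wop n \<omega> r w)))) (adj (Uop c))"
    by (simp only: adj_opmult opmult_assoc)
  then show ?thesis
    using assms by (simp add: Wop_conj_Qline Uop_conj_Qline is_line_translate)
qed

end

theorem mainTheorem8:
  fixes n :: nat and \<omega> :: "nat \<Rightarrow> 'a::{field,finite}" and r :: "nat \<Rightarrow> int" and \<xi> :: 'a
  assumes card: "CARD('a) = 2 ^ n"
    and char2: "(1::'a) + 1 = 0"
    and dual_basis: "\<forall>i<n. \<forall>j<n. Tr n (\<omega> i * \<omega> j) = (if i = j then 1 else 0)"
    and signs: "\<forall>i<n. r i = 1 \<or> r i = -1"
    and gen: "\<xi> \<noteq> 0" "\<forall>x::'a. x \<noteq> 0 \<longrightarrow> (\<exists>k::nat. x = \<xi> ^ k)"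
  shows
    \<comment> \<open>Q is well defined on lines\<close>
    "(\<forall>v u v' u'. u \<noteq> (0,0) \<longrightarrow> u' \<noteq> (0,0) \<longrightarrow> line v u = line v' u' \<longrightarrow>
        Qrep n \<omega> r v u = Qrep n \<omega> r v' u')
   \<and> quadrature_system (Qline n \<omega> r)
    \<comment> \<open>W is a projective unitary representation with multiplier i^g, which is Weyl\<close>
   \<and> proj_unitary_rep (Wop n \<omega> r) (\<lambda>u v. ipow (gZ4 n \<omega> r u v))
   \<and> weyl_multiplier n (\<lambda>u v. ipow (gZ4 n \<omega> r u v))
   \<and> (\<forall>l w. is_line l \<longrightarrow>
        opmult (opmult (Wop n \<omega> r w) (Qline n \<omega> r l)) (adj (Wop n \<omega> r w))
          = Qline n \<omega> r (translate l w))
    \<comment> \<open>U(A) is unitary and covariant\<close>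
   \<and> unitary_op (Uop \<xi>)
   \<and> (\<forall>l. is_line l \<longrightarrow>
        opmult (opmult (Uop \<xi>) (Qline n \<omega> r l)) (adj (Uop \<xi>)) = Qline n \<omega> r (line_act \<xi> l))
    \<comment> \<open>hence (T \<rtimes> V)-covariance: U(A^k) W(w) implements l \<mapsto> A^k (l + w)\<close>
   \<and> (\<forall>k::nat. \<forall>w l. is_line l \<longrightarrow>
        opmult (opmult (opmult (Uop (\<xi>^k)) (Wop n \<omega> r w)) (Qline n \<omega> r l))
               (adj (opmult (Uop (\<xi>^k)) (Wop n \<omega> r w)))
          = Qline n \<omega> r (line_act (\<xi>^k) (translate l w)))"
proof -
  interpret split_setting n \<omega> r
    using card char2 dual_basis signs by unfold_locales
  have "\<xi> ^ k \<noteq> 0" for k :: nat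
    using gen(1) by simp
  then show ?thesis
    using Qrep_eq_if_line_eq quadrature_system_Qline proj_unitary_rep_Wop weyl_multiplier_gZ4
      Wop_conj_Qline Uop_unitary[OF gen(1)] Uop_conj_Qline[OF gen(1)] Uop_Wop_conj_Qline
    by blast
qed

end
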